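(* For every $i\in\mathbb{N}$ and every situation $t\in[w_i]$, \[ \overline{\mathrm{E}}_t[X_i]=\tfrac12 . \]
   Context: Fair-coin game: in rounds $n=1,2,\dots$ Skeptic announces $M_n\in\mathbb{R}$ (depending only on $x_1,\dots,x_{n-1}$), then Reality announces $x_n\in\{-1,1\}$. A situation is a finite sequence $t=x_1\cdots x_l\in\{-1,1\}^l$. A path is an infinite sequence $\xi=x_1x_2\cdots$, and $\Omega$ is the set of paths. We write $\xi_n$ for the first $n$ terms of $\xi$, and say $\xi$ goes through $t$ if $\xi_l=t$. We write $s_n:=x_1+\cdots+x_n$, with $s_0=0$. A strategy $\mathcal{P}$ assigns a bet to each situation. Its capital process is $\mathcal{K}^{\mathcal{P}}(x_1\cdots x_n)=\sum_{k=1}^n\mathcal{P}(x_1\cdots x_{k-1})x_k$, and $\mathcal{K}^{\mathcal{P}}_n(\xi):=\mathcal{K}^{\mathcal{P}}(\xi_n)$. For a function $x:\Omega\to\mathbb{R}$ and a situation $t$ of length $l$, the upper price of $x$ at $t$ is \[ \overline{\mathrm{E}}_t[x]:=\inf\bigl\{a:\ \exists\mathcal{P}\ \forall\xi \text{ through } t:\ a+\mathcal{K}^{\mathcal{P}}_n(\xi)-\mathcal{K}^{\mathcal{P}}(t)\ge x(\xi)\ \text{for all but finitely many } n\bigr\}. \] Stopping times: set $v_0:=0$, and for $i\ge1$ \[ w_i:=\min\{n>v_{i-1}: s_n=0\},\qquad v_i:=\min\{n>w_i: |s_n|>\sqrt n-1\}, \] with $\min\emptyset=\infty$. Let $[w_i]$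 be the set of situations $\xi_{w_i(\xi)}$ over paths $\xi$ with $w_i(\xi)<\infty$. Finally, $X_i(\xi):=1$ if $v_i(\xi)<\infty$ and $s_{v_i}(\xi)<0$, and $X_i(\xi):=0$ otherwise. *)

theory Defs
  imports "HOL-Analysis.Analysis"
begin

text \<open>Fair-coin game. A path is xi :: nat => int with xi k = x_(k+1) in {-1,1};
  a situation is an int list with entries in {-1,1}.\<close>

definition paths :: "(nat \<Rightarrow> int) set" where
  "paths = {\<xi>. \<forall>k. \<xi> k \<in> {-1, 1}}"

definition prefix :: "(nat \<Rightarrow> int) \<Rightarrow> nat \<Rightarrow> int list" where
  "prefix \<xi> n = map \<xi> [0..<n]"

definition through :: "(nat \<Rightarrow> int) \<Rightarrow> int list \<Rightarrow> bool" where
  "through \<xi> t \<longleftrightarrow> prefix \<xi> (length t) = t"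

definition capital :: "(int list \<Rightarrow> real) \<Rightarrow> int list \<Rightarrow> real" where
  "capital P xs = (\<Sum>k<length xs. P (take k xs) * real_of_int (xs ! k))"

definition upper_price :: "int list \<Rightarrow> ((nat \<Rightarrow> int) \<Rightarrow> real) \<Rightarrow> ereal" where
  "upper_price t x = Inf (ereal ` {a. \<exists>P. \<forall>\<xi>\<in>paths. through \<xi> t \<longrightarrow>
      (\<forall>\<^sub>F n in sequentially. a + capital P (prefix \<xi> n) - capital P t \<ge> x \<xi>)})"

definition S :: "(nat \<Rightarrow> int) \<Rightarrow> nat \<Rightarrow> int" where
  "S \<xi> n = (\<Sum>k<n. \<xi> k)"

text \<open>min {n > m. Q n}, with None standing for infinity\<close>
definition first_after :: "nat \<Rightarrow> (nat \<Rightarrow> bool) \<Rightarrow> nat option" where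
  "first_after m Q = (if \<exists>n>m. Q n then Some (LEAST n. n > m \<and> Q n) else None)"

definition zero_cond :: "(nat \<Rightarrow> int) \<Rightarrow> nat \<Rightarrow> bool" where
  "zero_cond \<xi> n \<longleftrightarrow> S \<xi> n = 0"

definition exit_cond :: "(nat \<Rightarrow> int) \<Rightarrow> nat \<Rightarrow> bool" where
  "exit_cond \<xi> n \<longleftrightarrow> \<bar>real_of_int (S \<xi> n)\<bar> > sqrt (real n) - 1"

fun vstop :: "(nat \<Rightarrow> int) \<Rightarrow> nat \<Rightarrow> nat option" where
  "vstop \<xi> 0 = Some 0"
| "vstop \<xi> (Suc i) =
     Option.bind (Option.bind (vstop \<xi> i) (\<lambda>m. first_after m (zero_cond \<xi>)))
                 (\<lambda>m. first_after m (exit_cond \<xi>))"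

text \<open>w_i for i >= 1 (w_0 is not defined in the paper; we set it to None)\<close>
definition wstop :: "(nat \<Rightarrow> int) \<Rightarrow> nat \<Rightarrow> nat option" where
  "wstop \<xi> i = (if i = 0 then None
                 else Option.bind (vstop \<xi> (i - 1)) (\<lambda>m. first_after m (zero_cond \<xi>)))"

definition wsits :: "nat \<Rightarrow> int list set" where
  "wsits i = {prefix \<xi> m | \<xi> m. \<xi> \<in> paths \<and> wstop \<xi> i = Some m}"

definition Xvar :: "nat \<Rightarrow> (nat \<Rightarrow> int) \<Rightarrow> real" where
  "Xvar i \<xi> = (case vstop \<xi> i of Some m \<Rightarrow> (if S \<xi> m < 0 then 1 else 0) | None \<Rightarrow> 0)"

end

theory Submission
  imports Defs
begin

text \<open>At a situation \<open>t \<in> [w\<^sub>i]\<close> we have \<open>s = 0\<close>, and \<open>X\<^sub>i\<close> only depends on the first exit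
  after \<open>t\<close>. Cutting off at a horizon \<open>|t| + N\<close>, the indicator of an exit below zero by the horizon
  bounds \<open>X\<^sub>i\<close> from below, and adding the indicator of no exit by the horizon bounds it from above.
  Both bounds are functions of a finite history, and such a function has upper price equal to its
  mean over all continuations: Skeptic replicates it by betting the increments of the conditional
  means, while Reality can answer any strategy so that its capital never grows. Reflecting the
  moves after \<open>t\<close> shows that an exit below zero has exactly half the probability of an exit, so
  the two prices are \<open>(1 \<mp> q\<^sub>N) / 2\<close>, where \<open>q\<^sub>N\<close> is the probability of no exit by the
  horizon. Finally \<open>q\<^sub>N \<rightarrow> 0\<close>: at the times \<open>100\<^sup>j |t|\<close> the walk has to lie within
  \<open>\<surd>time\<close> of zero, and since the central binomial coefficient is \<open>O(2\<^sup>M / \<surd>M)\<close>, every new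
  stage keeps it there with conditional probability at most \<open>19/20\<close>.\<close>

section \<open>Pricing payoffs with a finite horizon\<close>

definition sign_lists :: "nat \<Rightarrow> int list set" where
  "sign_lists k = {xs. set xs \<subseteq> {-1, 1} \<and> length xs = k}"

lemma finite_sign_lists [simp]: "finite (sign_lists k)"
  unfolding sign_lists_def by (rule finite_lists_length_eq) simp

lemma card_sign_lists: "card (sign_lists k) = 2 ^ k"
  unfolding sign_lists_def by (subst card_lists_length_eq) (auto simp: numeral_2_eq_2)

lemma sign_lists_0 [simp]: "sign_lists 0 = {[]}"
  unfolding sign_lists_def by auto

lemma sum_sign_lists_Suc:
  "(\<Sum>ys\<in>sign_lists (Suc k). f ys) = (\<Sum>ys\<in>sign_lists k. f ((-1) # ys) + f (1 # ys))"
proof -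
  have eq: "sign_lists (Suc k) = (\<lambda>(ys, x). x # ys) ` (sign_lists k \<times> {-1, 1})"
    unfolding sign_lists_def by (rule lists_length_Suc_eq)
  have inj: "inj_on (\<lambda>(ys, x). x # ys) (sign_lists k \<times> {-1::int, 1})"
    by (auto simp: inj_on_def)
  have "(\<Sum>ys\<in>sign_lists (Suc k). f ys) = (\<Sum>(ys, x)\<in>sign_lists k \<times> {-1, 1}. f (x # ys))"
    unfolding eq by (subst sum.reindex[OF inj]) (simp add: case_prod_beta)
  also have "\<dots> = (\<Sum>ys\<in>sign_lists k. \<Sum>x\<in>{-1::int, 1}. f (x # ys))"
    by (rule sum.cartesian_product[symmetric])
  finally show ?thesis by simp
qed

lemma sum_sign_lists_add:
  "(\<Sum>ys\<in>sign_lists (a + b). f ys) = (\<Sum>ys\<in>sign_lists a. \<Sum>zs\<in>sign_lists b. f (ys @ zs))"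
proof (induction a arbitrary: f)
  case 0
  then show ?case by simp
next
  case (Suc a)
  have "(\<Sum>ys\<in>sign_lists (Suc a + b). f ys)
      = (\<Sum>ys\<in>sign_lists (a + b). f ((-1) # ys)) + (\<Sum>ys\<in>sign_lists (a + b). f (1 # ys))"
    using sum_sign_lists_Suc[of f "a + b"] by (simp add: sum.distrib)
  also have "\<dots> = (\<Sum>ys\<in>sign_lists (Suc a). \<Sum>zs\<in>sign_lists b. f (ys @ zs))"
    using Suc.IH[of "\<lambda>ys. f ((-1) # ys)"] Suc.IH[of "\<lambda>ys. f (1 # ys)"]
    by (simp add: sum_sign_lists_Suc sum.distrib)
  finally show ?case .
qed

lemma sign_lists_reflect:
  "(\<Sum>ys\<in>sign_lists k. f (map uminus ys)) = (\<Sum>ys\<in>sign_lists k. f ys)"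
  by (rule sum.reindex_bij_witness[of _ "map uminus" "map uminus"]) (auto simp: sign_lists_def)

lemma capital_snoc: "capital P (u @ [x]) = capital P u + P u * real_of_int x"
proof -
  have "capital P (u @ [x])
      = (\<Sum>k<length u. P (take k (u @ [x])) * real_of_int ((u @ [x]) ! k)) + P u * real_of_int x"
    unfolding capital_def by (simp add: nth_append)
  also have "(\<Sum>k<length u. P (take k (u @ [x])) * real_of_int ((u @ [x]) ! k)) = capital P u"
    unfolding capital_def by (intro sum.cong) (auto simp: nth_append)
  finally show ?thesis .
qed

lemma sum_sign_lists_capital:
  "(\<Sum>ys\<in>sign_lists k. capital P (u @ ys)) = 2 ^ k * capital P u"
proof (induction k arbitrary: u)
  case 0
  then show ?case by simp
next
  case (Suc k)
  have "(\<Sum>ys\<in>sign_lists (Suc k). capital P (u @ ys))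
      = (\<Sum>ys\<in>sign_lists k. capital P ((u @ [-1]) @ ys)) + (\<Sum>ys\<in>sign_lists k. capital P ((u @ [1]) @ ys))"
    by (simp add: sum_sign_lists_Suc sum.distrib)
  also have "\<dots> = 2 ^ k * (capital P (u @ [-1]) + capital P (u @ [1]))"
    using Suc.IH[of "u @ [-1]"] Suc.IH[of "u @ [1]"] by (simp add: algebra_simps)
  also have "\<dots> = 2 ^ Suc k * capital P u"
    by (simp add: capital_snoc)
  finally show ?case .
qed

definition ext_mean :: "(int list \<Rightarrow> real) \<Rightarrow> nat \<Rightarrow> int list \<Rightarrow> real" where
  "ext_mean G k u = (\<Sum>ys\<in>sign_lists k. G (u @ ys)) / 2 ^ k"

lemma ext_mean_0 [simp]: "ext_mean G 0 u = G u"
  by (simp add: ext_mean_def)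

lemma ext_mean_add: "ext_mean (\<lambda>w. F w + G w) k u = ext_mean F k u + ext_mean G k u"
  by (simp add: ext_mean_def sum.distrib add_divide_distrib)

lemma ext_mean_Suc: "ext_mean G (Suc k) u = (ext_mean G k (u @ [-1]) + ext_mean G k (u @ [1])) / 2"
  unfolding ext_mean_def by (simp add: sum_sign_lists_Suc sum.distrib add_divide_distrib)

text \<open>The conditional mean \<open>ext_mean G (D - length u) u\<close> is a martingale in \<open>u\<close>; betting half the
  difference of its two successor values makes the capital follow it exactly up to time \<open>D\<close>.\<close>

definition hedge :: "(int list \<Rightarrow> real) \<Rightarrow> nat \<Rightarrow> int list \<Rightarrow> real" where
  "hedge G D u = (if length u < D
     then (ext_mean G (D - length u - 1) (u @ [1]) - ext_mean G (D - length u - 1) (u @ [-1])) / 2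
     else 0)"

lemma capital_hedge:
  assumes "set ys \<subseteq> {-1, 1}" "length u + length ys \<le> D"
  shows "capital (hedge G D) (u @ ys) - capital (hedge G D) u
       = ext_mean G (D - length u - length ys) (u @ ys) - ext_mean G (D - length u) u"
  using assms
proof (induction ys rule: rev_induct)
  case Nil
  then show ?case by simp
next
  case (snoc x ys)
  define k where "k = D - length (u @ ys) - 1"
  have before: "D - length u - length ys = Suc k" and after: "D - length u - length (ys @ [x]) = k"
    using snoc.prems(2) by (simp_all add: k_def)
  have IH: "capital (hedge G D) (u @ ys) - capital (hedge G D) u
      = ext_mean G (Suc k) (u @ ys) - ext_mean G (D - length u) u"
    using snoc before by simp
  have bet: "hedge G D (u @ ys) = (ext_mean G k (u @ ys @ [1]) - ext_mean G k (u @ ys @ [-1])) / 2"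
    using snoc.prems(2) by (simp add: hedge_def k_def)
  have "x = -1 \<or> x = 1"
    using snoc.prems(1) by auto
  then show ?case
    using IH after bet capital_snoc[of "hedge G D" "u @ ys" x] ext_mean_Suc[of G k "u @ ys"]
    by (auto simp: algebra_simps)
qed

lemma capital_hedge_beyond:
  assumes "D \<le> length u"
  shows "capital (hedge G D) (u @ zs) = capital (hedge G D) u"
proof (induction zs rule: rev_induct)
  case Nil
  then show ?case by simp
next
  case (snoc x zs)
  have "hedge G D (u @ zs) = 0"
    using assms by (simp add: hedge_def)
  then show ?case
    using snoc capital_snoc[of "hedge G D" "u @ zs" x] by simp
qed

text \<open>Reality's replies that never let the capital of \<open>P\<close> grow.\<close>

primrec adverse :: "(int list \<Rightarrow> real) \<Rightarrow> int list \<Rightarrow> nat \<Rightarrow> int list" where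
  "adverse P u 0 = u"
| "adverse P u (Suc k) = adverse P u k @ [if P (adverse P u k) > 0 then -1 else 1]"

lemma length_adverse [simp]: "length (adverse P u k) = length u + k"
  by (induction k) auto

lemma take_adverse: "take (length u + k) (adverse P u (k + d)) = adverse P u k"
  by (induction d) auto

lemma set_adverse: "set u \<subseteq> {-1, 1} \<Longrightarrow> set (adverse P u k) \<subseteq> {-1, 1}"
  by (induction k) auto

lemma capital_adverse_le: "capital P (adverse P u k) \<le> capital P u"
proof (induction k)
  case 0
  then show ?case by simp
next
  case (Suc k)
  have "P (adverse P u k) * real_of_int (if P (adverse P u k) > 0 then -1 else 1) \<le> 0"
    by auto
  then show ?case
    using Suc capital_snoc[of P "adverse P u k"] by simp
qed

definition adverse_path :: "(int list \<Rightarrow> real) \<Rightarrow> int list \<Rightarrow> nat \<Rightarrow> int" where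
  "adverse_path P u j = adverse P u (Suc j) ! j"

lemma nth_adverse:
  assumes "j < length u + k"
  shows "adverse P u k ! j = adverse_path P u j"
proof (cases "Suc j \<le> k")
  case True
  then obtain d where "k = Suc j + d"
    using le_Suc_ex by blast
  then have "take (length u + Suc j) (adverse P u k) = adverse P u (Suc j)"
    by (metis take_adverse)
  then show ?thesis
    unfolding adverse_path_def by (metis lessI less_add_Suc2 nth_take add_Suc_right)
next
  case False
  then obtain d where "Suc j = k + d"
    using le_Suc_ex by (metis nat_le_linear)
  then have "take (length u + k) (adverse P u (Suc j)) = adverse P u k"
    by (metis take_adverse)
  then show ?thesis
    using assms unfolding adverse_path_def by (metis nth_take)
qed

lemma prefix_adverse_path: "prefix (adverse_path P u) (length u + k) = adverse P u k"
  by (rule nth_equalityI) (auto simp: prefix_def nth_adverse)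

lemma adverse_path_in_paths: "set u \<subseteq> {-1, 1} \<Longrightarrow> adverse_path P u \<in> paths"
proof -
  assume "set u \<subseteq> {-1, 1}"
  then have "adverse P u (Suc j) ! j \<in> {-1, 1}" for j
    using set_adverse[of u P "Suc j"] nth_mem[of j "adverse P u (Suc j)"] by auto
  then show ?thesis
    by (simp add: paths_def adverse_path_def)
qed

lemma length_prefix [simp]: "length (prefix \<xi> n) = n"
  by (simp add: prefix_def)

lemma take_prefix: "n \<le> N \<Longrightarrow> take n (prefix \<xi> N) = prefix \<xi> n"
  by (simp add: prefix_def take_map)

lemma prefix_add: "prefix \<xi> (m + n) = prefix \<xi> m @ drop m (prefix \<xi> (m + n))"
  using append_take_drop_id[of m "prefix \<xi> (m + n)"] take_prefix[of m "m + n" \<xi>] by simp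

lemma sum_list_prefix: "sum_list (prefix \<xi> n) = S \<xi> n"
  by (induction n) (simp_all add: S_def prefix_def)

lemma set_prefix: "\<xi> \<in> paths \<Longrightarrow> set (prefix \<xi> n) \<subseteq> {-1, 1}"
  by (auto simp: prefix_def paths_def)

lemma through_append: "through \<xi> (t @ ys) \<Longrightarrow> through \<xi> t"
  unfolding through_def using take_prefix[of "length t" "length t + length ys" \<xi>]
  by (metis append_eq_conv_conj le_add1 length_append)

lemma prefix_through_add:
  assumes "\<xi> \<in> paths" "through \<xi> t"
  obtains ys where "prefix \<xi> (length t + N) = t @ ys" "ys \<in> sign_lists N"
proof
  show "prefix \<xi> (length t + N) = t @ drop (length t) (prefix \<xi> (length t + N))"
    using assms(2) prefix_add[of \<xi> "length t" N] by (simp add: through_def)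
  show "drop (length t) (prefix \<xi> (length t + N)) \<in> sign_lists N"
    using set_prefix[OF assms(1), of "length t + N"]
      set_drop_subset[of "length t" "prefix \<xi> (length t + N)"]
    by (auto simp: sign_lists_def)
qed

definition superhedging_prices :: "int list \<Rightarrow> ((nat \<Rightarrow> int) \<Rightarrow> real) \<Rightarrow> real set" where
  "superhedging_prices t x = {a. \<exists>P. \<forall>\<xi>\<in>paths. through \<xi> t \<longrightarrow>
      (\<forall>\<^sub>F n in sequentially. a + capital P (prefix \<xi> n) - capital P t \<ge> x \<xi>)}"

lemma upper_price_eq_Inf_superhedging_prices:
  "upper_price t x = Inf (ereal ` superhedging_prices t x)"
  by (simp add: upper_price_def superhedging_prices_def)

lemma ext_mean_in_superhedging_prices:
  assumes "\<And>\<xi>. \<xi> \<in> paths \<Longrightarrow> through \<xi> t \<Longrightarrow> x \<xi> \<le> G (prefix \<xi> (length t + N))"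
  shows "ext_mean G N t \<in> superhedging_prices t x"
proof -
  define D where "D = length t + N"
  have "ext_mean G N t + capital (hedge G D) (prefix \<xi> n) - capital (hedge G D) t \<ge> x \<xi>"
    if \<xi>: "\<xi> \<in> paths" "through \<xi> t" and n: "D \<le> n" for \<xi> n
  proof -
    obtain ys where w: "prefix \<xi> D = t @ ys" "ys \<in> sign_lists N"
      using prefix_through_add[OF \<xi>] unfolding D_def by blast
    have "capital (hedge G D) (prefix \<xi> n) = capital (hedge G D) (prefix \<xi> D)"
      using capital_hedge_beyond[of D "prefix \<xi> D" G] prefix_add[of \<xi> D "n - D"] n
      by (metis order_refl length_prefix le_add_diff_inverse)
    also have "\<dots> = capital (hedge G D) t + G (prefix \<xi> D) - ext_mean G N t"
      using capital_hedge[of ys t D G] w by (simp add: sign_lists_def D_def)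
    finally show ?thesis
      using assms[OF \<xi>] by (simp add: D_def)
  qed
  then show ?thesis
    unfolding superhedging_prices_def eventually_sequentially by blast
qed

lemma ext_mean_le_superhedging_price:
  assumes t: "set t \<subseteq> {-1, 1}" and a: "a \<in> superhedging_prices t x"
    and g: "\<And>ys \<xi>. ys \<in> sign_lists N \<Longrightarrow> \<xi> \<in> paths \<Longrightarrow> through \<xi> (t @ ys) \<Longrightarrow> g (t @ ys) \<le> x \<xi>"
  shows "ext_mean g N t \<le> a"
proof -
  obtain P where P: "\<And>\<xi>. \<xi> \<in> paths \<Longrightarrow> through \<xi> t \<Longrightarrow>
      \<forall>\<^sub>F n in sequentially. a + capital P (prefix \<xi> n) - capital P t \<ge> x \<xi>"
    using a by (auto simp: superhedging_prices_def)
  have "g (t @ ys) \<le> a + capital P (t @ ys) - capital P t" if ys: "ys \<in> sign_lists N" for ys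
  proof -
    define u where "u = t @ ys"
    define \<eta> where "\<eta> = adverse_path P u"
    have \<eta>: "\<eta> \<in> paths" "through \<eta> u"
      using adverse_path_in_paths[of u P] prefix_adverse_path[of P u 0] t ys
      by (auto simp: \<eta>_def u_def sign_lists_def through_def)
    then obtain n0 where "\<forall>n\<ge>n0. a + capital P (prefix \<eta> n) - capital P t \<ge> x \<eta>"
      using P through_append unfolding u_def eventually_sequentially by blast
    then have "x \<eta> \<le> a + capital P (adverse P u n0) - capital P t"
      using prefix_adverse_path[of P u n0] unfolding \<eta>_def by (metis le_add2)
    also have "\<dots> \<le> a + capital P u - capital P t"
      using capital_adverse_le by simp
    finally show ?thesis
      using g[OF ys \<eta>(1)] \<eta>(2) by (simp add: u_def)
  qed
  then have "(\<Sum>ys\<in>sign_lists N. g (t @ ys)) \<le> (\<Sum>ys\<in>sign_lists N. a + capital P (t @ ys) - capital P t)"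
    by (rule sum_mono)
  also have "\<dots> = 2 ^ N * a"
    by (simp add: sum_subtractf sum.distrib sum_sign_lists_capital card_sign_lists)
  finally show ?thesis
    by (simp add: ext_mean_def field_simps)
qed

section \<open>The stopping times\<close>

lemma first_after_eq_Some_iff:
  "first_after m Q = Some b \<longleftrightarrow> m < b \<and> Q b \<and> (\<forall>n. m < n \<and> n < b \<longrightarrow> \<not> Q n)"
proof
  assume "first_after m Q = Some b"
  then have ex: "\<exists>n>m. Q n" and b: "b = (LEAST n. n > m \<and> Q n)"
    by (auto simp: first_after_def split: if_splits)
  from ex obtain n0 where "n0 > m \<and> Q n0"
    by blast
  then have "m < b \<and> Q b"
    unfolding b by (rule LeastI)
  moreover have "\<forall>n. m < n \<and> n < b \<longrightarrow> \<not> Q n"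
    using not_less_Least b by blast
  ultimately show "m < b \<and> Q b \<and> (\<forall>n. m < n \<and> n < b \<longrightarrow> \<not> Q n)"
    by blast
next
  assume h: "m < b \<and> Q b \<and> (\<forall>n. m < n \<and> n < b \<longrightarrow> \<not> Q n)"
  then have "(LEAST n. n > m \<and> Q n) = b"
    by (intro Least_equality) (auto simp: not_less[symmetric])
  then show "first_after m Q = Some b"
    using h by (auto simp: first_after_def)
qed

lemma first_after_eq_None_iff: "first_after m Q = None \<longleftrightarrow> (\<forall>n>m. \<not> Q n)"
  by (auto simp: first_after_def)

lemma first_after_cong:
  assumes "first_after m Q = Some b" "\<And>n. n \<le> b \<Longrightarrow> Q n = Q' n"
  shows "first_after m Q' = Some b"
  using assms unfolding first_after_eq_Some_iff by auto

lemma S_cong: "(\<And>k. k < M \<Longrightarrow> \<xi> k = \<eta> k) \<Longrightarrow> n \<le> M \<Longrightarrow> S \<xi> n = S \<eta> n"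
  unfolding S_def by (rule sum.cong) auto

lemma vstop_cong:
  assumes "\<And>k. k < M \<Longrightarrow> \<xi> k = \<eta> k" "vstop \<xi> j = Some a" "a \<le> M"
  shows "vstop \<eta> j = Some a"
  using assms(2,3)
proof (induction j arbitrary: a)
  case 0
  then show ?case by simp
next
  case (Suc j)
  from Suc.prems obtain a0 b where a0: "vstop \<xi> j = Some a0"
    and b: "first_after a0 (zero_cond \<xi>) = Some b" and a: "first_after b (exit_cond \<xi>) = Some a"
    by (auto simp: bind_eq_Some_conv)
  have "a0 < b" "b < a"
    using a b by (auto simp: first_after_eq_Some_iff)
  then have "vstop \<eta> j = Some a0"
    using Suc.IH[OF a0] Suc.prems(2) by simp
  moreover have "first_after a0 (zero_cond \<eta>) = Some b"
    using b \<open>b < a\<close> Suc.prems assms(1)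
    by (intro first_after_cong[OF b]) (simp add: zero_cond_def S_cong[OF assms(1)])
  moreover have "first_after b (exit_cond \<eta>) = Some a"
    using Suc.prems assms(1)
    by (intro first_after_cong[OF a]) (simp add: exit_cond_def S_cong[OF assms(1)])
  ultimately show ?case
    by simp
qed

lemma wstop_cong:
  assumes "\<And>k. k < M \<Longrightarrow> \<xi> k = \<eta> k" "wstop \<xi> i = Some M"
  shows "wstop \<eta> i = Some M"
proof -
  from assms(2) obtain a0 where i: "i \<noteq> 0" and a0: "vstop \<xi> (i - 1) = Some a0"
    and M: "first_after a0 (zero_cond \<xi>) = Some M"
    by (auto simp: wstop_def bind_eq_Some_conv split: if_splits)
  have "vstop \<eta> (i - 1) = Some a0"
    using vstop_cong[OF assms(1) a0] M by (simp add: first_after_eq_Some_iff)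
  moreover have "first_after a0 (zero_cond \<eta>) = Some M"
    using assms(1) by (intro first_after_cong[OF M]) (simp add: zero_cond_def S_cong[OF assms(1)])
  ultimately show ?thesis
    using i by (simp add: wstop_def)
qed

lemma through_prefix_eq:
  assumes "through \<eta> (prefix \<xi> M)" "k < M"
  shows "\<xi> k = \<eta> k"
proof -
  have "prefix \<eta> M ! k = prefix \<xi> M ! k"
    using assms(1) by (simp add: through_def)
  then show ?thesis
    using assms(2) by (simp add: prefix_def)
qed

lemma wsitsD:
  assumes "t \<in> wsits i"
  shows "set t \<subseteq> {-1, 1}" "sum_list t = 0" "1 \<le> length t"
    "\<And>\<eta>. through \<eta> t \<Longrightarrow> vstop \<eta> i = first_after (length t) (exit_cond \<eta>)"
proof -
  from assms obtain \<xi> M where \<xi>: "\<xi> \<in> paths" "wstop \<xi> i = Some M" and t: "t = prefix \<xi> M"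
    by (auto simp: wsits_def)
  from \<xi>(2) obtain a0 where "first_after a0 (zero_cond \<xi>) = Some M"
    by (auto simp: wstop_def bind_eq_Some_conv split: if_splits)
  then have "a0 < M" "zero_cond \<xi> M"
    by (simp_all add: first_after_eq_Some_iff)
  then show "set t \<subseteq> {-1, 1}" "sum_list t = 0" "1 \<le> length t"
    using t set_prefix[OF \<xi>(1)] by (simp_all add: zero_cond_def sum_list_prefix)
  fix \<eta> assume "through \<eta> t"
  then have "wstop \<eta> i = Some M"
    using wstop_cong[OF _ \<xi>(2)] through_prefix_eq t by blast
  moreover obtain j where "i = Suc j"
    using \<xi>(2) by (cases i) (auto simp: wstop_def)
  ultimately show "vstop \<eta> i = first_after (length t) (exit_cond \<eta>)"
    using t by (auto simp: wstop_def bind_eq_Some_conv)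
qed

section \<open>Exits below zero and reflection\<close>

lemma Xvar_nonneg: "0 \<le> Xvar i \<eta>" and Xvar_le_1: "Xvar i \<eta> \<le> 1"
  by (auto simp: Xvar_def split: option.splits)

definition list_exit_cond :: "int list \<Rightarrow> nat \<Rightarrow> bool" where
  "list_exit_cond w n \<longleftrightarrow> \<bar>real_of_int (sum_list (take n w))\<bar> > sqrt (real n) - 1"

definition exit_time :: "nat \<Rightarrow> int list \<Rightarrow> nat option" where
  "exit_time l w = first_after l (\<lambda>n. n \<le> length w \<and> list_exit_cond w n)"

definition neg_exit :: "nat \<Rightarrow> int list \<Rightarrow> real" where
  "neg_exit l w =
     (case exit_time l w of None \<Rightarrow> 0 | Some n \<Rightarrow> if sum_list (take n w) < 0 then 1 else 0)"

definition no_exit :: "nat \<Rightarrow> int list \<Rightarrow> real" where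
  "no_exit l w = (if exit_time l w = None then 1 else 0)"

lemma exit_time_prefix:
  assumes "exit_time l (prefix \<eta> n) = Some k"
  shows "first_after l (exit_cond \<eta>) = Some k" "sum_list (take k (prefix \<eta> n)) = S \<eta> k"
proof -
  have k: "k \<le> n"
    using assms by (simp add: exit_time_def first_after_eq_Some_iff)
  have S: "sum_list (take j (prefix \<eta> n)) = S \<eta> j" if "j \<le> n" for j
    using that by (simp add: take_prefix sum_list_prefix)
  show "first_after l (exit_cond \<eta>) = Some k"
    using assms unfolding exit_time_def
    by (rule first_after_cong) (use k S in \<open>auto simp: list_exit_cond_def exit_cond_def\<close>)
  show "sum_list (take k (prefix \<eta> n)) = S \<eta> k"
    using S k by simp
qed

lemma Xvar_eq_neg_exit:
  assumes "t \<in> wsits i" "through \<eta> t" "exit_time (length t) (prefix \<eta> n) = Some k"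
  shows "Xvar i \<eta> = neg_exit (length t) (prefix \<eta> n)"
  using wsitsD(4)[OF assms(1,2)] exit_time_prefix[OF assms(3)] assms(3)
  by (simp add: Xvar_def neg_exit_def)

lemma neg_exit_le_Xvar:
  assumes "t \<in> wsits i" "through \<eta> t"
  shows "neg_exit (length t) (prefix \<eta> n) \<le> Xvar i \<eta>"
  using Xvar_eq_neg_exit[OF assms] Xvar_nonneg[of i \<eta>]
  by (cases "exit_time (length t) (prefix \<eta> n)") (auto simp: neg_exit_def)

lemma Xvar_le_neg_exit_add_no_exit:
  assumes "t \<in> wsits i" "through \<eta> t"
  shows "Xvar i \<eta> \<le> neg_exit (length t) (prefix \<eta> n) + no_exit (length t) (prefix \<eta> n)"
  using Xvar_eq_neg_exit[OF assms] Xvar_le_1[of i \<eta>]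
  by (cases "exit_time (length t) (prefix \<eta> n)") (auto simp: neg_exit_def no_exit_def)

lemma sum_take_reflect:
  fixes t ys :: "int list"
  assumes "sum_list t = 0"
  shows "sum_list (take n (t @ map uminus ys))
       = (if n \<le> length t then sum_list (take n (t @ ys)) else - sum_list (take n (t @ ys)))"
  using assms uminus_sum_list_map[of "\<lambda>x. x" "take (n - length t) ys"] by (simp add: take_map o_def)

lemma exit_time_reflect:
  assumes "sum_list t = 0"
  shows "exit_time (length t) (t @ map uminus ys) = exit_time (length t) (t @ ys)"
proof -
  have "list_exit_cond (t @ map uminus ys) = list_exit_cond (t @ ys)"
    unfolding list_exit_cond_def using sum_take_reflect[OF assms] by (auto simp: fun_eq_iff)
  then show ?thesis
    by (simp add: exit_time_def)
qed

text \<open>Reflecting the moves after \<open>t\<close> swaps exits below zero with exits above zero.\<close>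

lemma neg_exit_reflect:
  assumes "sum_list t = 0"
  shows "neg_exit (length t) (t @ map uminus ys) + neg_exit (length t) (t @ ys)
       = 1 - no_exit (length t) (t @ ys)"
proof (cases "exit_time (length t) (t @ ys)")
  case None
  then show ?thesis
    using exit_time_reflect[OF assms] by (simp add: neg_exit_def no_exit_def)
next
  case (Some n)
  then have "length t < n" "list_exit_cond (t @ ys) n"
    by (auto simp: exit_time_def first_after_eq_Some_iff)
  moreover have "1 \<le> sqrt (real n)"
    using \<open>length t < n\<close> by simp
  ultimately have "0 < \<bar>real_of_int (sum_list (take n (t @ ys)))\<bar>"
    unfolding list_exit_cond_def by linarith
  then have "sum_list (take n (t @ ys)) \<noteq> 0"
    by auto
  then show ?thesis
    using Some exit_time_reflect[OF assms] sum_take_reflect[OF assms, of n ys] \<open>length t < n\<close>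
    by (auto simp: neg_exit_def no_exit_def)
qed

lemma ext_mean_neg_exit:
  assumes "sum_list t = 0"
  shows "2 * ext_mean (neg_exit (length t)) N t = 1 - ext_mean (no_exit (length t)) N t"
proof -
  have "2 * (\<Sum>ys\<in>sign_lists N. neg_exit (length t) (t @ ys))
      = (\<Sum>ys\<in>sign_lists N. neg_exit (length t) (t @ map uminus ys) + neg_exit (length t) (t @ ys))"
    using sign_lists_reflect[of "\<lambda>ys. neg_exit (length t) (t @ ys)" N] by (simp add: sum.distrib)
  also have "\<dots> = 2 ^ N - (\<Sum>ys\<in>sign_lists N. no_exit (length t) (t @ ys))"
    by (simp add: neg_exit_reflect[OF assms] sum_subtractf card_sign_lists)
  finally show ?thesis
    by (simp add: ext_mean_def field_simps)
qed

section \<open>The walk leaves the square-root band\<close>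

lemma sum_list_sign_list:
  "set ys \<subseteq> {-1, 1} \<Longrightarrow> sum_list ys = 2 * int (count_list ys 1) - int (length ys)"
  by (induction ys) auto

lemma sign_lists_count_list_choose:
  "(\<Sum>ys\<in>sign_lists M. if count_list ys 1 = c then 1 else 0 :: real) = real (M choose c)"
proof (induction M arbitrary: c)
  case 0
  then show ?case by simp
next
  case (Suc M)
  have "(\<Sum>ys\<in>sign_lists (Suc M). if count_list ys 1 = c then 1 else 0 :: real)
      = real (M choose c) + (\<Sum>ys\<in>sign_lists M. if Suc (count_list ys 1) = c then 1 else 0 :: real)"
    by (simp add: sum_sign_lists_Suc sum.distrib Suc.IH)
  also have "\<dots> = real (Suc M choose c)"
    using Suc.IH by (cases c) auto
  finally show ?case .
qed

lemma sum_sign_lists_count_list: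
  "(\<Sum>ys\<in>sign_lists M. f (count_list ys 1) :: real) = (\<Sum>c\<le>M. real (M choose c) * f c)"
proof -
  have "f (count_list ys 1) = (\<Sum>c\<le>M. (if count_list ys 1 = c then 1 else 0) * f c)"
    if "ys \<in> sign_lists M" for ys
  proof -
    have "(\<Sum>c\<le>M. (if count_list ys 1 = c then 1 else 0) * f c)
        = (\<Sum>c\<le>M. if count_list ys 1 = c then f c else 0)"
      by (rule sum.cong) auto
    then show ?thesis
      using that count_le_length[of ys 1] by (simp add: sign_lists_def sum.delta')
  qed
  then have "(\<Sum>ys\<in>sign_lists M. f (count_list ys 1))
      = (\<Sum>c\<le>M. \<Sum>ys\<in>sign_lists M. (if count_list ys 1 = c then 1 else 0) * f c)"
    by (simp add: sum.swap[of _ "{..M}"])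
  also have "\<dots> = (\<Sum>c\<le>M. real (M choose c) * f c)"
    by (simp add: sum_distrib_right[symmetric] sign_lists_count_list_choose)
  finally show ?thesis .
qed

text \<open>The points \<open>x + 2c - M\<close> are spaced \<open>2\<close> apart, so a window of radius \<open>r\<close> holds at most
  \<open>r + 1\<close> of them.\<close>

lemma card_window_le:
  fixes x :: int and r :: real
  assumes "0 \<le> r"
  shows "real (card {c\<in>{..M}. \<bar>real_of_int x + 2 * real c - real M\<bar> \<le> r}) \<le> r + 1"
proof (cases "{c\<in>{..M}. \<bar>real_of_int x + 2 * real c - real M\<bar> \<le> r} = {}")
  case True
  then show ?thesis
    using assms by (metis card.empty of_nat_0 add_nonneg_nonneg zero_le_one)
next
  case False
  define A where "A = {c\<in>{..M}. \<bar>real_of_int x + 2 * real c - real M\<bar> \<le> r}"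
  define c0 where "c0 = Min A"
  have "finite A" "A \<noteq> {}"
    using False by (simp_all add: A_def)
  then have c0: "c0 \<in> A" "\<And>c. c \<in> A \<Longrightarrow> c0 \<le> c"
    by (simp_all add: c0_def)
  have "A \<subseteq> {c0..c0 + nat \<lfloor>r\<rfloor>}"
  proof
    fix c assume c: "c \<in> A"
    then have "real c - real c0 \<le> r"
      using c0(1) by (auto simp: A_def)
    then have "int c - int c0 \<le> \<lfloor>r\<rfloor>"
      by (simp add: le_floor_iff)
    then show "c \<in> {c0..c0 + nat \<lfloor>r\<rfloor>}"
      using c0(2)[OF c] by auto
  qed
  then have "card A \<le> nat \<lfloor>r\<rfloor> + 1"
    using card_mono[of "{c0..c0 + nat \<lfloor>r\<rfloor>}" A] by simp
  then show ?thesis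
    using assms unfolding A_def by linarith
qed

lemma central_binomial_even_le: "real ((2 * k) choose k) ^ 2 * (3 * k + 1) \<le> 16 ^ k"
proof (induction k)
  case 0
  then show ?case by simp
next
  case (Suc k)
  define c where "c = real ((2 * k) choose k)"
  define c' where "c' = real ((2 * Suc k) choose Suc k)"
  have step: "real (Suc k) * c' = 2 * (2 * real k + 1) * c"
  proof -
    define b where "b = real (Suc (2 * k) choose k)"
    have "real (Suc k) * c' = real (Suc (Suc (2 * k))) * b"
      unfolding c'_def b_def by (metis Suc_times_binomial mult_2 add_Suc_right add_Suc of_nat_mult)
    moreover have "Suc (2 * k) choose Suc k = Suc (2 * k) choose k"
      using central_binomial_odd[of "Suc (2 * k)"] by (simp del: binomial_Suc_Suc)
    then have "real (Suc (2 * k)) * c = b * real (Suc k)"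
      unfolding c_def b_def using Suc_times_binomial_eq[of "2 * k" k] by (metis of_nat_mult)
    ultimately show ?thesis
      by (simp add: algebra_simps)
  qed
  have "(real (Suc k))\<^sup>2 * (c'\<^sup>2 * (3 * real k + 4)) = (real (Suc k) * c')\<^sup>2 * (3 * real k + 4)"
    by (simp add: power_mult_distrib)
  also have "\<dots> = 4 * c\<^sup>2 * ((2 * real k + 1)\<^sup>2 * (3 * real k + 4))"
    unfolding step by (simp add: power_mult_distrib power2_eq_square algebra_simps)
  also have "\<dots> \<le> 4 * c\<^sup>2 * (4 * (real k + 1)\<^sup>2 * (3 * real k + 1))"
    by (intro mult_left_mono) (simp_all add: power2_eq_square algebra_simps)
  also have "\<dots> \<le> 16 * (real k + 1)\<^sup>2 * 16 ^ k"
    using Suc.IH by (simp add: c_def add.commute mult.assoc mult.left_commute[of _ "c\<^sup>2"])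
  finally have "(real (Suc k))\<^sup>2 * (c'\<^sup>2 * (3 * real k + 4)) \<le> (real (Suc k))\<^sup>2 * 16 ^ Suc k"
    by (simp add: algebra_simps)
  then have "c'\<^sup>2 * (3 * real k + 4) \<le> 16 ^ Suc k"
    by (rule mult_left_le_imp_le) simp
  then have "c'\<^sup>2 * real (3 * Suc k + 1) \<le> 16 ^ Suc k"
    by (simp add: algebra_simps)
  then show ?case
    by (simp only: c'_def)
qed

lemma central_binomial_le: "real (M choose (M div 2)) ^ 2 * (3 * M + 1) \<le> 2 * 4 ^ M"
proof (cases "even M")
  case True
  then obtain k where M: "M = 2 * k"
    by blast
  have "real (M choose (M div 2)) ^ 2 * (3 * M + 1) \<le> 2 * (real ((2 * k) choose k) ^ 2 * (3 * k + 1))"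
    using M by (simp add: algebra_simps)
  also have "\<dots> \<le> 2 * 16 ^ k"
    using central_binomial_even_le[of k] by simp
  finally show ?thesis
    using M by (simp add: power_mult)
next
  case False
  then obtain k where M: "M = Suc (2 * k)"
    by (metis oddE Suc_eq_plus1)
  define C where "C = real (Suc (2 * k) choose k)"
  have "Suc (2 * k) choose Suc k = Suc (2 * k) choose k"
    using central_binomial_odd[of "Suc (2 * k)"] by (simp del: binomial_Suc_Suc)
  then have "real ((2 * Suc k) choose Suc k) = 2 * C"
    unfolding C_def by (simp del: binomial_Suc_Suc add: binomial_Suc_Suc[of "Suc (2 * k)" k])
  then have "(2 * C) ^ 2 * (3 * real k + 4) \<le> 16 * 16 ^ k"
    using central_binomial_even_le[of "Suc k"] by (simp add: algebra_simps)
  then have "C ^ 2 * (3 * real k + 4) \<le> 4 * 16 ^ k"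
    by (simp add: power_mult_distrib)
  moreover have "C ^ 2 * (3 * real M + 1) \<le> 2 * (C ^ 2 * (3 * real k + 4))"
    using M by (simp add: algebra_simps)
  moreover have "(4::real) ^ M = 4 * 16 ^ k" and "real (M choose (M div 2)) = C"
    using M by (simp_all add: power_mult C_def)
  ultimately show ?thesis
    by (simp add: add.commute)
qed

lemma sum_sign_lists_window_le:
  fixes x :: int and r :: real
  assumes "0 \<le> r"
  shows "(\<Sum>ys\<in>sign_lists M. if \<bar>real_of_int (x + sum_list ys)\<bar> \<le> r then 1 else 0 :: real)
     \<le> (r + 1) * real (M choose (M div 2))"
proof -
  define f where "f c = (if \<bar>real_of_int x + 2 * real c - real M\<bar> \<le> r then 1 else 0 :: real)" for c
  have "(\<Sum>ys\<in>sign_lists M. if \<bar>real_of_int (x + sum_list ys)\<bar> \<le> r then 1 else 0 :: real)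
      = (\<Sum>ys\<in>sign_lists M. f (count_list ys 1))"
    by (intro sum.cong refl) (auto simp: f_def sign_lists_def sum_list_sign_list add_diff_eq)
  also have "\<dots> = (\<Sum>c\<le>M. real (M choose c) * f c)"
    by (rule sum_sign_lists_count_list)
  also have "\<dots> \<le> real (M choose (M div 2)) * (\<Sum>c\<le>M. f c)"
    unfolding sum_distrib_left
    by (intro sum_mono mult_right_mono) (simp_all add: binomial_maximum f_def)
  also have "(\<Sum>c\<le>M. f c) = real (card {c\<in>{..M}. \<bar>real_of_int x + 2 * real c - real M\<bar> \<le> r})"
    by (simp add: f_def sum.inter_filter[symmetric])
  also have "real (M choose (M div 2)) * \<dots> \<le> real (M choose (M div 2)) * (r + 1)"
    by (intro mult_left_mono card_window_le assms) simp
  finally show ?thesis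
    by (simp add: mult.commute)
qed

text \<open>With \<open>M = 99 K\<close> new moves after time \<open>K\<close>, the walk lands in a given window of radius
  \<open>\<surd>(100 K)\<close> with probability at most \<open>11 \<surd>K \<cdot> \<surd>(2 / (297 K)) < 19/20\<close>.\<close>

lemma window_binomial_le:
  assumes "1 \<le> K"
  shows "(sqrt (real (100 * K)) + 1) * real ((99 * K) choose ((99 * K) div 2)) \<le> 19/20 * 2 ^ (99 * K)"
proof -
  define C where "C = real ((99 * K) choose ((99 * K) div 2))"
  have "C\<^sup>2 * (297 * real K + 1) \<le> 2 * 4 ^ (99 * K)"
    using central_binomial_le[of "99 * K"] by (simp add: C_def add.commute)
  moreover have "297 * (real K * C\<^sup>2) \<le> C\<^sup>2 * (297 * real K + 1)"
    by (simp add: algebra_simps)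
  ultimately have C: "real K * C\<^sup>2 \<le> 2 * 4 ^ (99 * K) / 297"
    by simp
  define sk where "sk = sqrt (real K)"
  have sk: "sk \<le> real K" "sk * sk = real K" "sqrt (real (100 * K)) = 10 * sk"
    using assms by (auto simp: sk_def real_sqrt_mult intro!: real_le_lsqrt simp: power2_eq_square)
  then have "(sqrt (real (100 * K)) + 1)\<^sup>2 \<le> 121 * real K"
    using assms by (simp add: power2_eq_square algebra_simps)
  then have "((sqrt (real (100 * K)) + 1) * C)\<^sup>2 \<le> 121 * real K * C\<^sup>2"
    by (simp add: power_mult_distrib mult_right_mono)
  also have "\<dots> \<le> (19/20)\<^sup>2 * 4 ^ (99 * K)"
    using C zero_le_power[of "4::real" "99 * K"] by (simp only: power2_eq_square) linarith
  also have "\<dots> = (19/20 * 2 ^ (99 * K))\<^sup>2"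
    by (simp add: power2_eq_square power_mult_distrib[symmetric])
  finally show ?thesis
    unfolding C_def by (rule power2_le_imp_le) simp
qed

lemma sum_sign_lists_near_le:
  assumes "1 \<le> K"
  shows "(\<Sum>zs\<in>sign_lists (99 * K).
      of_bool (\<bar>real_of_int (x + sum_list zs)\<bar> \<le> sqrt (real (100 * K))) :: real)
    \<le> 19/20 * 2 ^ (99 * K)"
  using order_trans[OF sum_sign_lists_window_le window_binomial_le[OF assms]]
  by (simp add: of_bool_def)

definition checkpoint :: "nat \<Rightarrow> nat \<Rightarrow> nat" where
  "checkpoint m j = 100 ^ j * m"

text \<open>For the moves \<open>ys\<close> following a situation of length \<open>m\<close> with \<open>s\<^sub>m = 0\<close>, the partial sum
  of the first \<open>checkpoint m j - m\<close> entries is the position at time \<open>checkpoint m j\<close>.\<close>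

definition in_band :: "nat \<Rightarrow> nat \<Rightarrow> int list \<Rightarrow> bool" where
  "in_band m J ys \<longleftrightarrow> (\<forall>j\<in>{1..J}.
     \<bar>real_of_int (sum_list (take (checkpoint m j - m) ys))\<bar> \<le> sqrt (real (checkpoint m j)))"

lemma checkpoint_mono: "j \<le> J \<Longrightarrow> checkpoint m j \<le> checkpoint m J"
  unfolding checkpoint_def by (intro mult_right_mono power_increasing) simp_all

lemma le_checkpoint: "m \<le> checkpoint m j"
  using checkpoint_mono[of 0 j m] by (simp add: checkpoint_def)

lemma in_band_SucD:
  assumes ys: "length ys = checkpoint m J - m" and zs: "length zs = 99 * checkpoint m J"
    and band: "in_band m (Suc J) (ys @ zs)"
  shows "in_band m J ys"
    and "\<bar>real_of_int (sum_list ys + sum_list zs)\<bar> \<le> sqrt (real (100 * checkpoint m J))"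
proof -
  show "in_band m J ys"
    unfolding in_band_def
  proof
    fix j assume j: "j \<in> {1..J}"
    then have eq: "take (checkpoint m j - m) (ys @ zs) = take (checkpoint m j - m) ys"
      using checkpoint_mono[of j J m] ys by simp
    from band j have "\<bar>real_of_int (sum_list (take (checkpoint m j - m) (ys @ zs)))\<bar>
        \<le> sqrt (real (checkpoint m j))"
      unfolding in_band_def by auto
    then show "\<bar>real_of_int (sum_list (take (checkpoint m j - m) ys))\<bar> \<le> sqrt (real (checkpoint m j))"
      by (simp only: eq)
  qed
  have "checkpoint m (Suc J) - m = length (ys @ zs)"
    using ys zs le_checkpoint[of m J] by (simp add: checkpoint_def mult_ac)
  then show "\<bar>real_of_int (sum_list ys + sum_list zs)\<bar> \<le> sqrt (real (100 * checkpoint m J))"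
    using band unfolding in_band_def by (auto dest!: bspec[of _ _ "Suc J"] simp: checkpoint_def mult.assoc)
qed

text \<open>Each stage multiplies the time by 100, so the new moves dominate and the band at the next
  checkpoint is hit with conditional probability at most \<open>19/20\<close>.\<close>

lemma sum_in_band_le:
  assumes "1 \<le> m"
  shows "(\<Sum>ys\<in>sign_lists (checkpoint m J - m). of_bool (in_band m J ys) :: real)
       \<le> (19/20) ^ J * 2 ^ (checkpoint m J - m)"
proof (induction J)
  case 0
  then show ?case by (simp add: checkpoint_def in_band_def)
next
  case (Suc J)
  define N where "N = checkpoint m J - m"
  define K where "K = checkpoint m J"
  define M where "M = 99 * K"
  define near where "near ys zs \<longleftrightarrow> \<bar>real_of_int (sum_list ys + sum_list zs)\<bar> \<le> sqrt (real (100 * K))"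
    for ys zs
  have K: "1 \<le> K"
    using le_checkpoint[of m J] assms by (simp add: K_def)
  have NM: "checkpoint m (Suc J) - m = N + M"
    using le_checkpoint[of m J] by (simp add: N_def M_def K_def checkpoint_def mult_ac)
  have "(\<Sum>ys\<in>sign_lists (checkpoint m (Suc J) - m). of_bool (in_band m (Suc J) ys) :: real)
      = (\<Sum>ys\<in>sign_lists N. \<Sum>zs\<in>sign_lists M. of_bool (in_band m (Suc J) (ys @ zs)))"
    unfolding NM by (rule sum_sign_lists_add)
  also have "\<dots> \<le> (\<Sum>ys\<in>sign_lists N. of_bool (in_band m J ys) * (\<Sum>zs\<in>sign_lists M. of_bool (near ys zs)))"
    unfolding sum_distrib_left
    by (intro sum_mono) (use in_band_SucD in \<open>auto simp: sign_lists_def N_def M_def K_def near_def\<close>)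
  also have "\<dots> \<le> (\<Sum>ys\<in>sign_lists N. of_bool (in_band m J ys) * (19/20 * 2 ^ M))"
    unfolding M_def near_def using sum_sign_lists_near_le[OF K]
    by (intro sum_mono mult_left_mono) (simp_all add: add.assoc)
  also have "\<dots> = 19/20 * 2 ^ M * (\<Sum>ys\<in>sign_lists N. of_bool (in_band m J ys))"
    by (metis (no_types) sum_distrib_right mult.commute)
  also have "\<dots> \<le> 19/20 * 2 ^ M * ((19/20) ^ J * 2 ^ N)"
    using Suc.IH by (intro mult_left_mono) (simp_all add: N_def)
  also have "\<dots> = (19/20) ^ Suc J * 2 ^ (checkpoint m (Suc J) - m)"
    unfolding NM by (simp add: power_add)
  finally show ?case .
qed

lemma no_exit_imp_in_band:
  assumes "sum_list t = 0" "1 \<le> length t" "length ys = checkpoint (length t) J - length t"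
    and "exit_time (length t) (t @ ys) = None"
  shows "in_band (length t) J ys"
  unfolding in_band_def
proof
  fix j assume j: "j \<in> {1..J}"
  define n where "n = checkpoint (length t) j"
  have "100 * length t \<le> n"
    using j assms(2) le_checkpoint[of "100 * length t" "j - 1"]
    by (simp add: n_def checkpoint_def power_eq_if)
  then have n: "length t < n" "n \<le> length (t @ ys)"
    using assms(2,3) j checkpoint_mono[of j J "length t"] le_checkpoint[of "length t" J]
    by (auto simp: n_def)
  then have "\<not> list_exit_cond (t @ ys) n"
    using assms(4) by (auto simp: exit_time_def first_after_eq_None_iff)
  moreover have "sum_list (take n (t @ ys)) = sum_list (take (n - length t) ys)"
    using n assms(1) by simp
  ultimately show "\<bar>real_of_int (sum_list (take (checkpoint (length t) j - length t) ys))\<bar>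
      \<le> sqrt (real (checkpoint (length t) j))"
    by (simp add: list_exit_cond_def n_def)
qed

lemma ext_mean_no_exit_le:
  assumes "sum_list t = 0" "1 \<le> length t"
  shows "ext_mean (no_exit (length t)) (checkpoint (length t) J - length t) t \<le> (19/20) ^ J"
proof -
  define N where "N = checkpoint (length t) J - length t"
  have "(\<Sum>ys\<in>sign_lists N. no_exit (length t) (t @ ys))
      \<le> (\<Sum>ys\<in>sign_lists N. of_bool (in_band (length t) J ys))"
    using no_exit_imp_in_band[OF assms] by (intro sum_mono) (auto simp: no_exit_def sign_lists_def N_def)
  also have "\<dots> \<le> (19/20) ^ J * 2 ^ N"
    unfolding N_def by (rule sum_in_band_le[OF assms(2)])
  finally show ?thesis
    by (simp add: ext_mean_def N_def field_simps)
qed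

lemma ext_mean_no_exit_small:
  assumes "sum_list t = 0" "1 \<le> length t" "0 < e"
  shows "\<exists>N. ext_mean (no_exit (length t)) N t < e"
proof -
  obtain J where "(19/20::real) ^ J < e"
    using real_arch_pow_inv[OF assms(3), of "19/20"] by auto
  then show ?thesis
    using ext_mean_no_exit_le[OF assms(1,2), of J] by (meson le_less_trans)
qed

section \<open>The upper price of \<open>X\<^sub>i\<close>\<close>

lemma Inf_ereal_eq_squeeze:
  fixes A :: "real set" and c :: real and d :: "nat \<Rightarrow> real"
  assumes lower: "\<And>a N. a \<in> A \<Longrightarrow> c - d N \<le> a"
    and upper: "\<And>N. c + d N \<in> A"
    and small: "\<And>e. 0 < e \<Longrightarrow> \<exists>N. d N < e"
  shows "Inf (ereal ` A) = ereal c"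
proof (rule antisym)
  show "Inf (ereal ` A) \<le> ereal c"
  proof (rule ereal_le_epsilon2)
    fix e :: real assume "0 < e"
    then obtain N where "d N < e"
      using small by blast
    then have "Inf (ereal ` A) \<le> ereal (c + d N)"
      using upper by (intro Inf_lower imageI)
    also have "\<dots> \<le> ereal c + ereal e"
      using \<open>d N < e\<close> by simp
    finally show "Inf (ereal ` A) \<le> ereal c + ereal e" .
  qed
  have "c \<le> a" if "a \<in> A" for a
  proof (rule ccontr)
    assume "\<not> c \<le> a"
    then obtain N where "d N < c - a"
      using small[of "c - a"] by auto
    then show False
      using lower[OF that, of N] by simp
  qed
  then show "ereal c \<le> Inf (ereal ` A)"
    by (auto intro: Inf_greatest)
qed

lemma superhedging_price_Xvar_ge:
  assumes t: "t \<in> wsits i" and a: "a \<in> superhedging_prices t (Xvar i)"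
  shows "(1 - ext_mean (no_exit (length t)) N t) / 2 \<le> a"
proof -
  have "ext_mean (neg_exit (length t)) N t \<le> a"
    using wsitsD(1)[OF t] a
  proof (rule ext_mean_le_superhedging_price)
    fix ys \<xi> assume "through \<xi> (t @ ys)"
    then show "neg_exit (length t) (t @ ys) \<le> Xvar i \<xi>"
      using neg_exit_le_Xvar[OF t through_append, of \<xi> ys "length (t @ ys)"]
      by (simp add: through_def)
  qed
  then show ?thesis
    using ext_mean_neg_exit[OF wsitsD(2)[OF t], of N] by simp
qed

lemma superhedging_prices_Xvar_mem:
  assumes t: "t \<in> wsits i"
  shows "(1 + ext_mean (no_exit (length t)) N t) / 2 \<in> superhedging_prices t (Xvar i)"
proof -
  have "ext_mean (\<lambda>w. neg_exit (length t) w + no_exit (length t) w) N t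
      = (1 + ext_mean (no_exit (length t)) N t) / 2"
    unfolding ext_mean_add using ext_mean_neg_exit[OF wsitsD(2)[OF t], of N] by (simp add: field_simps)
  moreover have "ext_mean (\<lambda>w. neg_exit (length t) w + no_exit (length t) w) N t
      \<in> superhedging_prices t (Xvar i)"
    using Xvar_le_neg_exit_add_no_exit[OF t] by (rule ext_mean_in_superhedging_prices)
  ultimately show ?thesis
    by metis
qed

theorem mainTheorem12:
  fixes i :: nat and t :: "int list"
  assumes "i \<ge> 1" and "t \<in> wsits i"
  shows "upper_price t (Xvar i) = ereal (1/2)"
  unfolding upper_price_eq_Inf_superhedging_prices
proof (rule Inf_ereal_eq_squeeze[where d = "\<lambda>N. ext_mean (no_exit (length t)) N t / 2"])
  fix a N assume "a \<in> superhedging_prices t (Xvar i)"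
  then show "1/2 - ext_mean (no_exit (length t)) N t / 2 \<le> a"
    using superhedging_price_Xvar_ge[OF assms(2)] by (simp add: diff_divide_distrib)
next
  fix N
  show "1/2 + ext_mean (no_exit (length t)) N t / 2 \<in> superhedging_prices t (Xvar i)"
    using superhedging_prices_Xvar_mem[OF assms(2)] by (simp add: add_divide_distrib)
next
  fix e :: real assume "0 < e"
  then show "\<exists>N. ext_mean (no_exit (length t)) N t / 2 < e"
    using ext_mean_no_exit_small[OF wsitsD(2,3)[OF assms(2)], of "2 * e"] by (simp add: mult.commute)
qed

end
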